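(* Let $r\ge 1$ and let $\epsilon,\xi_1,\dots,\xi_{r+1},p_1,\dots,p_{r+1},a_1,\dots,a_{r+1}$ be indeterminates. Put $s_i(z)=z-p_i$, $\Lambda(z)=\prod_{i=1}^{r+1}(z-a_i)$, and let $\mathrm{Wr}$ denote the relations (coefficientwise in $z$) $$\frac{\det_{1\le i,j\le r+1}\big[\xi_i^{j-1}\,s_i(z+\epsilon(j-1))\big]}{\det_{1\le i,j\le r+1}\big[\xi_i^{j-1}\big]}=\Lambda(z).$$ Define ${\rm Fun}(\epsilon{\rm Op}_Z^{\Lambda})=\mathbb{C}(\epsilon,\xi_i,p_i,a_i)/\mathrm{Wr}$. Let $m=(m_{ij})_{i,j=1}^{r+1}$ be the trigonometric Calogero–Moser Lax matrix $$m_{ii}=p_i-\epsilon\,\xi_i\sum_{k\neq i}\frac{1}{\xi_i-\xi_k},\qquad m_{ij}=\frac{\epsilon\,\xi_i}{\xi_i-\xi_j}\,\frac{\prod_{k\neq i}(\xi_i-\xi_k)}{\prod_{k\neq j}(\xi_j-\xi_k)}\ (i\neq j),$$ and define the tCM Hamiltonians $H^{tCM}_k(\epsilon,\{\xi_i\},\{p_i\})$ by $\det(z-m)=\sum_k H^{tCM}_k z^k$. Then there is an isomorphism of algebras $${\rm Fun}(\epsilon{\rm Op}_Z^{\Lambda})\cong \mathbb{C}(\epsilon,\xi_i,p_i,a_i)\big/\big(\text{relations } \det(z-m)=\Lambda(z)\text{ coefficientwise in } z\big).$$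
   Context: This algebra is the algebra of functions on the space of canonical $Z$-twisted Miura $(SL(r+1),\epsilon)$-opers on $\mathbb{P}^1$ (with $Z=\mathrm{diag}(\xi_1,\dots,\xi_{r+1})$ regular semisimple, and regular singularities exactly at the distinct roots $a_i$ of $\Lambda$); for such opers the section of the line subbundle has components $s_i(z)=z-p_i$ and the only defining relation is the $\epsilon$-shifted twisted Wronskian condition $\mathrm{Wr}$ above. *)

theory Defs
  imports "Jordan_Normal_Form.Char_Poly"
begin

text \<open>Indices i,j run over 0..r (i.e. i < r+1), shifted by one from the paper.
  All polynomials are polynomials in the variable z with complex coefficients;
  the indeterminates eps, xi_i, p_i, a_i are given arbitrary complex values.\<close>

definition vander_mat :: "nat \<Rightarrow> (nat \<Rightarrow> complex) \<Rightarrow> complex mat" where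
  "vander_mat n xi = mat n n (\<lambda>(i,j). xi i ^ j)"

definition wr_mat :: "nat \<Rightarrow> complex \<Rightarrow> (nat \<Rightarrow> complex) \<Rightarrow> (nat \<Rightarrow> complex) \<Rightarrow> complex poly mat" where
  "wr_mat n eps xi p = mat n n (\<lambda>(i,j). Polynomial.smult (xi i ^ j) [: eps * of_nat j - p i, 1 :])"

definition wr_poly :: "nat \<Rightarrow> complex \<Rightarrow> (nat \<Rightarrow> complex) \<Rightarrow> (nat \<Rightarrow> complex) \<Rightarrow> complex poly" where
  "wr_poly n eps xi p = Polynomial.smult (1 / det (vander_mat n xi)) (det (wr_mat n eps xi p))"

definition Lambda_poly :: "nat \<Rightarrow> (nat \<Rightarrow> complex) \<Rightarrow> complex poly" where
  "Lambda_poly n a = (\<Prod>i<n. [: - a i, 1 :])"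

definition tCM_lax :: "nat \<Rightarrow> complex \<Rightarrow> (nat \<Rightarrow> complex) \<Rightarrow> (nat \<Rightarrow> complex) \<Rightarrow> complex mat" where
  "tCM_lax n eps xi p = mat n n (\<lambda>(i,j).
     if i = j then p i - eps * xi i * (\<Sum>k\<in>{0..<n} - {i}. 1 / (xi i - xi k))
     else eps * xi i / (xi i - xi j) *
          ((\<Prod>k\<in>{0..<n} - {i}. xi i - xi k) / (\<Prod>k\<in>{0..<n} - {j}. xi j - xi k)))"

definition tCM_poly :: "nat \<Rightarrow> complex \<Rightarrow> (nat \<Rightarrow> complex) \<Rightarrow> (nat \<Rightarrow> complex) \<Rightarrow> complex poly" where
  "tCM_poly n eps xi p = char_poly (tCM_lax n eps xi p)"

definition tCM_hamiltonian :: "nat \<Rightarrow> complex \<Rightarrow> (nat \<Rightarrow> complex) \<Rightarrow> (nat \<Rightarrow> complex) \<Rightarrow> nat \<Rightarrow> complex" where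
  "tCM_hamiltonian n eps xi p k = coeff (tCM_poly n eps xi p) k"

end

theory Submission
  imports Defs
begin

(* Put V = [xi_i^j] and W = [xi_i^j (z + eps j - p_i)], so Wr = det W / det V. If E is the matrix of
  the Euler operator x d/dx in the Lagrange basis at the nodes xi, interpolating the monomials x^j
  gives E V = V diag(0, ..., r); hence W = (z - N) V with N = diag(p) - eps E, and Wr = det (z - N).
  The entries of E are explicit in the nodal products prod_{k ~= i} (xi_i - xi_k), and they show
  m_ij d_j = d_i N_ji for d_i = xi_i prod_{k ~= i} (xi_i - xi_k)^2. So m is conjugate to N^T when
  no node is 0; a node xi_k = 0 only makes row k of m and of N vanish off the diagonal, and
  Laplace expansion along that row reduces to the remaining nodes. *)

lemma char_poly_eq_of_scaled_transpose:
  fixes A B :: "'a :: field mat"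
  assumes A: "A \<in> carrier_mat n n" and B: "B \<in> carrier_mat n n"
    and d: "\<And>i. i < n \<Longrightarrow> d i \<noteq> 0"
    and scaled: "\<And>i j. i < n \<Longrightarrow> j < n \<Longrightarrow> A $$ (i,j) * d j = d i * B $$ (j,i)"
  shows "char_poly A = char_poly B"
proof -
  let ?D = "mat_diag n d" and ?D' = "mat_diag n (\<lambda>i. 1 / d i)"
  have "?D * B\<^sup>T * ?D' = mat n n (\<lambda>(i,j). d i * B $$ (j,i) * (1 / d j))"
    using B by (auto simp: mat_diag_mult_left[of _ n n] mat_diag_mult_right[of _ n n])
  also have "\<dots> = A"
    using A d by (auto simp: scaled[symmetric])
  finally have "A = ?D * B\<^sup>T * ?D'" ..
  moreover have "?D * ?D' = 1\<^sub>m n" "?D' * ?D = 1\<^sub>m n"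
    unfolding mat_diag_diag using d by (auto simp: mat_diag_def)
  ultimately have "similar_mat A B\<^sup>T"
    using A B by (intro similar_matI) auto
  then show ?thesis
    using B by (simp add: char_poly_similar)
qed

lemma char_poly_isolated_row:
  fixes A :: "'a :: comm_ring_1 mat"
  assumes A: "A \<in> carrier_mat n n" and k: "k < n"
    and row: "\<And>j. j < n \<Longrightarrow> j \<noteq> k \<Longrightarrow> A $$ (k,j) = 0"
  shows "char_poly A = [:- A $$ (k,k), 1:] * char_poly (mat_delete A k k)"
proof -
  let ?C = "char_poly_matrix A"
  have C: "?C \<in> carrier_mat n n" using A by simp
  have "char_poly A = (\<Sum>j<n. ?C $$ (k,j) * cofactor ?C k j)"
    unfolding char_poly_def by (rule laplace_expansion_row[OF C k])
  also have "\<dots> = (\<Sum>j<n. if j = k then ?C $$ (k,k) * cofactor ?C k k else 0)"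
    using A k row by (intro sum.cong) (auto simp: char_poly_matrix_def)
  also have "\<dots> = ?C $$ (k,k) * cofactor ?C k k"
    using k by simp
  also have "?C $$ (k,k) = [:- A $$ (k,k), 1:]"
    using A k by (simp add: char_poly_matrix_def)
  also have "cofactor ?C k k = char_poly (mat_delete A k k)"
    using A k by (auto simp: cofactor_def char_poly_def char_poly_matrix_def mat_delete_def
        intro!: arg_cong[of _ _ det])
  finally show ?thesis .
qed

lemma char_poly_eq_of_scaled_transpose_isolated:
  fixes A B :: "'a :: field mat"
  assumes "A \<in> carrier_mat n n" and "B \<in> carrier_mat n n"
    and "\<And>i j. i < n \<Longrightarrow> j < n \<Longrightarrow> A $$ (i,j) * d j = d i * B $$ (j,i)"
    and "\<And>i j. i < n \<Longrightarrow> j < n \<Longrightarrow> d i = 0 \<Longrightarrow> j \<noteq> i \<Longrightarrow> A $$ (i,j) = 0 \<and> B $$ (i,j) = 0"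
    and "\<And>i. i < n \<Longrightarrow> A $$ (i,i) = B $$ (i,i)"
  shows "char_poly A = char_poly B"
  using assms
proof (induction n arbitrary: A B d)
  case (Suc n)
  show ?case
  proof (cases "\<exists>k < Suc n. d k = 0")
    case False
    then show ?thesis
      using Suc.prems by (intro char_poly_eq_of_scaled_transpose[where d = d]) auto
  next
    case True
    then obtain k where k: "k < Suc n" "d k = 0" by blast
    let ?up = "\<lambda>i. if i < k then i else Suc i"
    have up: "?up i < Suc n" "?up i = ?up j \<longleftrightarrow> i = j" if "i < n" "j < n" for i j
      using that k by auto
    have delete: "mat_delete X k k \<in> carrier_mat n n"
      "\<And>i j. i < n \<Longrightarrow> j < n \<Longrightarrow> mat_delete X k k $$ (i,j) = X $$ (?up i, ?up j)"
      if "X \<in> carrier_mat (Suc n) (Suc n)" for X :: "'a mat"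
      using that by (auto simp: mat_delete_def)
    have "char_poly (mat_delete A k k) = char_poly (mat_delete B k k)"
      using Suc.prems up by (intro Suc.IH[where d = "d \<circ> ?up"]) (auto simp: delete)
    then show ?thesis
      using Suc.prems k
      by (simp add: char_poly_isolated_row[of A "Suc n" k] char_poly_isolated_row[of B "Suc n" k])
  qed
qed (auto intro: char_poly_eq_of_scaled_transpose)

definition nodal_prod :: "nat \<Rightarrow> (nat \<Rightarrow> 'a :: comm_ring_1) \<Rightarrow> nat \<Rightarrow> 'a" where
  "nodal_prod n xi i = (\<Prod>k\<in>{0..<n} - {i}. xi i - xi k)"

definition lagrange_basis :: "nat \<Rightarrow> (nat \<Rightarrow> 'a :: field) \<Rightarrow> nat \<Rightarrow> 'a poly" where
  "lagrange_basis n xi k = Polynomial.smult (1 / nodal_prod n xi k) (\<Prod>m\<in>{0..<n} - {k}. [:- xi m, 1:])"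

lemma nodal_prod_nonzero:
  fixes xi :: "nat \<Rightarrow> 'a :: idom"
  assumes "inj_on xi {0..<n}" and "i < n"
  shows "nodal_prod n xi i \<noteq> 0"
  using assms by (auto simp: nodal_prod_def inj_on_def)

lemma poly_pderiv_prod_linear:
  fixes c :: "'b \<Rightarrow> 'a :: idom"
  assumes "finite S"
  shows "poly (pderiv (\<Prod>m\<in>S. [:- c m, 1:])) x = (\<Sum>a\<in>S. \<Prod>m\<in>S - {a}. x - c m)"
  using assms by (simp add: pderiv_prod pderiv_pCons poly_sum poly_prod)

lemma poly_pderiv_prod_linear_root:
  fixes c :: "'b \<Rightarrow> 'a :: idom"
  assumes "finite S" and "i \<in> S"
  shows "poly (pderiv (\<Prod>m\<in>S. [:- c m, 1:])) (c i) = (\<Prod>m\<in>S - {i}. c i - c m)"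
proof -
  have "(\<Sum>a\<in>S - {i}. \<Prod>m\<in>S - {a}. c i - c m) = 0"
    using assms by (intro sum.neutral ballI prod_zero) auto
  then show ?thesis
    using assms by (simp add: poly_pderiv_prod_linear sum.remove)
qed

lemma poly_pderiv_prod_linear_nonroot:
  fixes c :: "'b \<Rightarrow> 'a :: field"
  assumes "finite S" and "\<And>m. m \<in> S \<Longrightarrow> x \<noteq> c m"
  shows "poly (pderiv (\<Prod>m\<in>S. [:- c m, 1:])) x = (\<Prod>m\<in>S. x - c m) * (\<Sum>a\<in>S. 1 / (x - c a))"
proof -
  have "(\<Prod>m\<in>S - {a}. x - c m) = (\<Prod>m\<in>S. x - c m) / (x - c a)" if "a \<in> S" for a
    using assms that by (simp add: prod_diff1)
  then show ?thesis
    using assms by (simp add: poly_pderiv_prod_linear sum_distrib_left)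
qed

context
  fixes xi :: "nat \<Rightarrow> 'a :: field" and n :: nat
  assumes inj: "inj_on xi {0..<n}"
begin

lemma poly_lagrange_basis:
  assumes "i < n" and "k < n"
  shows "poly (lagrange_basis n xi k) (xi i) = (if i = k then 1 else 0)"
  using assms nodal_prod_nonzero[OF inj \<open>k < n\<close>]
  by (auto simp: lagrange_basis_def nodal_prod_def poly_prod)

lemma degree_lagrange_basis:
  assumes "k < n"
  shows "degree (lagrange_basis n xi k) < n"
proof -
  have "degree (\<Prod>m\<in>{0..<n} - {k}. [:- xi m, 1:]) \<le> (\<Sum>m\<in>{0..<n} - {k}. 1)"
    by (rule order_trans[OF degree_prod_sum_le]) auto
  also have "\<dots> < n"
    using assms by simp
  finally show ?thesis
    unfolding lagrange_basis_def using degree_smult_le le_less_trans by blast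
qed

lemma lagrange_interpolation:
  assumes "degree q < n"
  shows "(\<Sum>k<n. Polynomial.smult (poly q (xi k)) (lagrange_basis n xi k)) = q"
proof (rule poly_eqI_degree[of "xi ` {0..<n}"])
  fix x
  assume "x \<in> xi ` {0..<n}"
  then obtain i where i: "i < n" and x: "x = xi i"
    by auto
  have "(\<Sum>k<n. poly q (xi k) * poly (lagrange_basis n xi k) (xi i))
      = (\<Sum>k<n. if k = i then poly q (xi i) else 0)"
    using i by (intro sum.cong) (auto simp: poly_lagrange_basis)
  then show "poly (\<Sum>k<n. Polynomial.smult (poly q (xi k)) (lagrange_basis n xi k)) x = poly q x"
    using i x by (simp add: poly_sum)
next
  have card: "card (xi ` {0..<n}) = n"
    using inj by (simp add: card_image)
  show "degree (\<Sum>k<n. Polynomial.smult (poly q (xi k)) (lagrange_basis n xi k)) < card (xi ` {0..<n})"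
    unfolding card using assms
    by (intro degree_sum_less) (auto intro: le_less_trans[OF degree_smult_le] degree_lagrange_basis)
  show "degree q < card (xi ` {0..<n})"
    unfolding card by (rule assms)
qed

lemma poly_pderiv_lagrange_basis:
  assumes i: "i < n" and k: "k < n"
  shows "poly (pderiv (lagrange_basis n xi k)) (xi i) =
    (if i = k then (\<Sum>m\<in>{0..<n} - {i}. 1 / (xi i - xi m))
     else nodal_prod n xi i / ((xi i - xi k) * nodal_prod n xi k))"
proof (cases "i = k")
  case True
  have "poly (pderiv (\<Prod>m\<in>{0..<n} - {k}. [:- xi m, 1:])) (xi k)
      = nodal_prod n xi k * (\<Sum>m\<in>{0..<n} - {k}. 1 / (xi k - xi m))"
    using inj k by (subst poly_pderiv_prod_linear_nonroot) (auto simp: nodal_prod_def inj_on_def)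
  then show ?thesis
    using True nodal_prod_nonzero[OF inj k] by (simp add: lagrange_basis_def pderiv_smult)
next
  case False
  have "nodal_prod n xi i = (xi i - xi k) * (\<Prod>m\<in>{0..<n} - {k} - {i}. xi i - xi m)"
    unfolding nodal_prod_def using False k by (subst prod.remove[of _ k]) (auto intro: prod.cong)
  moreover have "poly (pderiv (\<Prod>m\<in>{0..<n} - {k}. [:- xi m, 1:])) (xi i)
      = (\<Prod>m\<in>{0..<n} - {k} - {i}. xi i - xi m)"
    using False i by (intro poly_pderiv_prod_linear_root) auto
  moreover have "xi i - xi k \<noteq> 0"
    using inj False i k by (auto simp: inj_on_def)
  ultimately show ?thesis
    using False by (simp add: lagrange_basis_def pderiv_smult)
qed

lemma euler_lagrange_basis:
  assumes "j < n"
  shows "x * (\<Sum>k<n. xi k ^ j * poly (pderiv (lagrange_basis n xi k)) x) = of_nat j * x ^ j"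
proof -
  have "(\<Sum>k<n. Polynomial.smult (xi k ^ j) (lagrange_basis n xi k)) = monom 1 j"
    using lagrange_interpolation[of "monom 1 j"] assms by (simp add: poly_monom degree_monom_eq)
  then have "poly (pderiv (\<Sum>k<n. Polynomial.smult (xi k ^ j) (lagrange_basis n xi k))) x
      = poly (pderiv (monom 1 j)) x"
    by simp
  then have "(\<Sum>k<n. xi k ^ j * poly (pderiv (lagrange_basis n xi k)) x) = of_nat j * x ^ (j - 1)"
    by (simp add: higher_pderiv_sum[of 1, simplified] poly_sum pderiv_smult pderiv_monom poly_monom)
  then show ?thesis
    by (cases j) auto
qed

end

lemma vander_mat_left_inverse:
  assumes inj: "inj_on xi {0..<n}"
  shows "mat n n (\<lambda>(j,k). coeff (lagrange_basis n xi k) j) * vander_mat n xi = 1\<^sub>m n"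
proof (rule eq_matI)
  fix i j
  assume "i < dim_row (1\<^sub>m n :: complex mat)" and "j < dim_col (1\<^sub>m n :: complex mat)"
  then have i: "i < n" and j: "j < n"
    by auto
  have "(\<Sum>k<n. coeff (lagrange_basis n xi k) i * xi k ^ j)
      = coeff (\<Sum>k<n. Polynomial.smult (poly (monom 1 j) (xi k)) (lagrange_basis n xi k)) i"
    by (simp add: coeff_sum poly_monom mult.commute)
  also have "\<dots> = coeff (monom 1 j) i"
    using inj j by (simp add: lagrange_interpolation degree_monom_eq)
  finally show "(mat n n (\<lambda>(j,k). coeff (lagrange_basis n xi k) j) * vander_mat n xi) $$ (i,j) = 1\<^sub>m n $$ (i,j)"
    using i j by (simp add: vander_mat_def scalar_prod_def atLeast0LessThan)
qed (simp_all add: vander_mat_def)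

lemma det_vander_mat_nonzero:
  assumes "inj_on xi {0..<n}"
  shows "det (vander_mat n xi) \<noteq> 0"
proof -
  let ?L = "mat n n (\<lambda>(j,k). coeff (lagrange_basis n xi k) j)"
  have "det ?L * det (vander_mat n xi) = 1"
    using det_mult[of ?L n "vander_mat n xi"] vander_mat_left_inverse[OF assms]
    by (simp add: vander_mat_def)
  then show ?thesis
    by auto
qed

(* N = diag(p) - eps E, with E the Euler operator x d/dx in the Lagrange basis at the nodes xi. *)
definition wr_lax :: "nat \<Rightarrow> 'a :: field \<Rightarrow> (nat \<Rightarrow> 'a) \<Rightarrow> (nat \<Rightarrow> 'a) \<Rightarrow> 'a mat" where
  "wr_lax n eps xi p = mat n n (\<lambda>(i,k).
     (if i = k then p i else 0) - eps * xi i * poly (pderiv (lagrange_basis n xi k)) (xi i))"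

lemma wr_lax_mult_powers:
  assumes "inj_on xi {0..<n}" and i: "i < n" and j: "j < n"
  shows "(\<Sum>k<n. wr_lax n eps xi p $$ (i,k) * xi k ^ j) = (p i - eps * of_nat j) * xi i ^ j"
proof -
  have "(\<Sum>k<n. wr_lax n eps xi p $$ (i,k) * xi k ^ j)
      = (\<Sum>k<n. (if k = i then p i * xi i ^ j else 0)
          - eps * xi i * (xi k ^ j * poly (pderiv (lagrange_basis n xi k)) (xi i)))"
    using i by (intro sum.cong) (auto simp: wr_lax_def algebra_simps)
  also have "\<dots> = p i * xi i ^ j
      - eps * (xi i * (\<Sum>k<n. xi k ^ j * poly (pderiv (lagrange_basis n xi k)) (xi i)))"
    using i by (simp add: sum_subtractf sum_distrib_left mult.assoc)
  also have "\<dots> = (p i - eps * of_nat j) * xi i ^ j"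
    using assms by (simp add: euler_lagrange_basis algebra_simps)
  finally show ?thesis .
qed

interpretation const_poly_hom: comm_ring_hom "\<lambda>a :: 'a :: comm_ring_1. [:a:]"
  by unfold_locales auto

lemma wr_mat_factorization:
  assumes "inj_on xi {0..<n}"
  shows "wr_mat n eps xi p = char_poly_matrix (wr_lax n eps xi p) * map_mat (\<lambda>a. [:a:]) (vander_mat n xi)"
proof (rule eq_matI)
  fix i j
  assume "i < dim_row (char_poly_matrix (wr_lax n eps xi p) * map_mat (\<lambda>a. [:a:]) (vander_mat n xi))"
    and "j < dim_col (char_poly_matrix (wr_lax n eps xi p) * map_mat (\<lambda>a. [:a:]) (vander_mat n xi))"
  then have i: "i < n" and j: "j < n"
    by (auto simp: char_poly_matrix_def wr_lax_def vander_mat_def)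
  let ?N = "wr_lax n eps xi p"
  have "char_poly_matrix ?N \<in> carrier_mat n n"
    by (simp add: wr_lax_def)
  then have "(char_poly_matrix ?N * map_mat (\<lambda>a. [:a:]) (vander_mat n xi)) $$ (i,j)
      = (\<Sum>k<n. char_poly_matrix ?N $$ (i,k) * [:xi k ^ j:])"
    using i j by (simp add: vander_mat_def scalar_prod_def atLeast0LessThan)
  also have "\<dots> = (\<Sum>k<n. (if k = i then [:0, xi i ^ j:] else 0) - [:?N $$ (i,k) * xi k ^ j:])"
    using i by (intro sum.cong) (auto simp: char_poly_matrix_def wr_lax_def algebra_simps)
  also have "\<dots> = [:0, xi i ^ j:] - [:\<Sum>k<n. ?N $$ (i,k) * xi k ^ j:]"
    using i by (simp add: sum_subtractf sum_to_poly)
  also have "\<dots> = wr_mat n eps xi p $$ (i,j)"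
    unfolding wr_lax_mult_powers[OF assms i j] using i j by (simp add: wr_mat_def algebra_simps)
  finally show "wr_mat n eps xi p $$ (i,j)
      = (char_poly_matrix ?N * map_mat (\<lambda>a. [:a:]) (vander_mat n xi)) $$ (i,j)" ..
qed (simp_all add: wr_mat_def char_poly_matrix_def wr_lax_def vander_mat_def)

lemma wr_poly_eq_char_poly_wr_lax:
  assumes "inj_on xi {0..<n}"
  shows "wr_poly n eps xi p = char_poly (wr_lax n eps xi p)"
proof -
  have "det (wr_mat n eps xi p) = char_poly (wr_lax n eps xi p) * [:det (vander_mat n xi):]"
    unfolding wr_mat_factorization[OF assms] char_poly_def const_poly_hom.hom_det[symmetric]
    by (rule det_mult[of _ n]) (simp_all add: wr_lax_def vander_mat_def)
  then show ?thesis
    using det_vander_mat_nonzero[OF assms] by (simp add: wr_poly_def)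
qed

lemma diag_wr_lax:
  assumes "inj_on xi {0..<n}" and "i < n"
  shows "wr_lax n eps xi p $$ (i,i) = p i - eps * xi i * (\<Sum>k\<in>{0..<n} - {i}. 1 / (xi i - xi k))"
  using assms by (simp add: wr_lax_def poly_pderiv_lagrange_basis)

lemma tCM_lax_scaled_transpose:
  assumes inj: "inj_on xi {0..<n}" and i: "i < n" and j: "j < n"
  shows "tCM_lax n eps xi p $$ (i,j) * (xi j * nodal_prod n xi j ^ 2)
       = (xi i * nodal_prod n xi i ^ 2) * wr_lax n eps xi p $$ (j,i)"
proof (cases "i = j")
  case True
  then show ?thesis
    using inj i by (simp add: diag_wr_lax tCM_lax_def)
next
  case False
  have "xi i - xi j \<noteq> 0" "xi j - xi i \<noteq> 0"
    using inj i j False by (auto simp: inj_on_def)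
  moreover have "nodal_prod n xi i \<noteq> 0" "nodal_prod n xi j \<noteq> 0"
    using nodal_prod_nonzero[OF inj] i j by auto
  ultimately show ?thesis
    using i j False
    by (simp add: tCM_lax_def wr_lax_def poly_pderiv_lagrange_basis[OF inj] nodal_prod_def[symmetric]
        field_simps power2_eq_square)
qed

lemma tCM_poly_eq_char_poly_wr_lax:
  assumes inj: "inj_on xi {0..<n}"
  shows "tCM_poly n eps xi p = char_poly (wr_lax n eps xi p)"
  unfolding tCM_poly_def
proof (rule char_poly_eq_of_scaled_transpose_isolated[where d = "\<lambda>i. xi i * nodal_prod n xi i ^ 2"])
  show "tCM_lax n eps xi p \<in> carrier_mat n n" "wr_lax n eps xi p \<in> carrier_mat n n"
    by (simp_all add: tCM_lax_def wr_lax_def)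
  show "\<And>i j. i < n \<Longrightarrow> j < n \<Longrightarrow> tCM_lax n eps xi p $$ (i,j) * (xi j * nodal_prod n xi j ^ 2)
      = (xi i * nodal_prod n xi i ^ 2) * wr_lax n eps xi p $$ (j,i)"
    by (rule tCM_lax_scaled_transpose[OF inj])
  show "\<And>i. i < n \<Longrightarrow> tCM_lax n eps xi p $$ (i,i) = wr_lax n eps xi p $$ (i,i)"
    using inj by (simp add: diag_wr_lax tCM_lax_def)
next
  fix i j
  assume "i < n" "j < n" "xi i * nodal_prod n xi i ^ 2 = 0" "j \<noteq> i"
  then show "tCM_lax n eps xi p $$ (i,j) = 0 \<and> wr_lax n eps xi p $$ (i,j) = 0"
    using nodal_prod_nonzero[OF inj] by (auto simp: tCM_lax_def wr_lax_def)
qed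

theorem mainTheorem1:
  fixes r :: nat and eps :: complex and xi p :: "nat \<Rightarrow> complex"
  assumes "r \<ge> 1"
    and "inj_on xi {0..<r+1}"
  shows "wr_poly (r+1) eps xi p = tCM_poly (r+1) eps xi p
    \<and> (\<forall>a. (\<forall>k. coeff (wr_poly (r+1) eps xi p) k = coeff (Lambda_poly (r+1) a) k)
         \<longleftrightarrow> (\<forall>k. tCM_hamiltonian (r+1) eps xi p k = coeff (Lambda_poly (r+1) a) k))"
proof -
  have "wr_poly (r+1) eps xi p = tCM_poly (r+1) eps xi p"
    using assms(2) by (simp add: wr_poly_eq_char_poly_wr_lax tCM_poly_eq_char_poly_wr_lax)
  then show ?thesis
    by (simp add: tCM_hamiltonian_def)
qed

end
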